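(* Let $G$ be an infinite locally finite graph, $F$ a subgraph of $G$, and $D$ a finite connected graph. If $F$ is faithful to $G$, then $F\square D$ is faithful to $G\square D$ (where $F\square D$ is regarded as a subgraph of $G\square D$ in the natural way).
   Context: $\square$ denotes the Cartesian product of graphs. A ray is a one-way infinite path; two rays of a graph $H$ are equivalent in $H$ if for every finite $S\subseteq V(H)$ some component of $H-S$ contains tails of both; the classes are the ends of $H$. A subgraph $A$ of $B$ is faithful to $B$ if (i) every end of $B$ contains a ray of $A$, and (ii) any two rays of $A$ are equivalent in $A$ if and only if they are equivalent in $B$. *)

theory Defs
  imports Main
begin

text \<open>A (simple, undirected) graph is a pair of a vertex set and a set of ordered
  vertex pairs (each undirected edge stored in both directions).\<close>
type_synonym 'a graph = "'a set \<times> ('a \<times> 'a) set"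

abbreviation verts :: "'a graph \<Rightarrow> 'a set" where "verts H \<equiv> fst H"
abbreviation edges :: "'a graph \<Rightarrow> ('a \<times> 'a) set" where "edges H \<equiv> snd H"

definition is_graph :: "'a graph \<Rightarrow> bool" where
  "is_graph H \<longleftrightarrow> edges H \<subseteq> verts H \<times> verts H \<and> sym (edges H) \<and> irrefl (edges H)"

definition subgraph :: "'a graph \<Rightarrow> 'a graph \<Rightarrow> bool" where
  "subgraph A B \<longleftrightarrow> is_graph A \<and> is_graph B \<and> verts A \<subseteq> verts B \<and> edges A \<subseteq> edges B"

definition locally_finite :: "'a graph \<Rightarrow> bool" where
  "locally_finite H \<longleftrightarrow> (\<forall>v\<in>verts H. finite {u. (v, u) \<in> edges H})"

definition finite_graph :: "'a graph \<Rightarrow> bool" where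
  "finite_graph H \<longleftrightarrow> finite (verts H)"

definition connected_graph :: "'a graph \<Rightarrow> bool" where
  "connected_graph H \<longleftrightarrow> verts H \<noteq> {} \<and> (\<forall>u\<in>verts H. \<forall>v\<in>verts H. (u, v) \<in> (edges H)\<^sup>*)"

definition cart_prod :: "'a graph \<Rightarrow> 'b graph \<Rightarrow> ('a \<times> 'b) graph" (infixl "\<box>" 70) where
  "H \<box> K = (verts H \<times> verts K,
     {((a, b), (c, d)). (a = c \<and> a \<in> verts H \<and> (b, d) \<in> edges K)
                      \<or> (b = d \<and> b \<in> verts K \<and> (a, c) \<in> edges H)})"

definition is_ray :: "'a graph \<Rightarrow> (nat \<Rightarrow> 'a) \<Rightarrow> bool" where
  "is_ray H r \<longleftrightarrow> inj r \<and> (\<forall>i. r i \<in> verts H) \<and> (\<forall>i. (r i, r (Suc i)) \<in> edges H)"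

definition component_of :: "'a graph \<Rightarrow> 'a set \<Rightarrow> 'a \<Rightarrow> 'a set" where
  "component_of H S x =
     {y. (x, y) \<in> (edges H \<inter> ((verts H - S) \<times> (verts H - S)))\<^sup>*}"

definition has_tail_in :: "(nat \<Rightarrow> 'a) \<Rightarrow> 'a set \<Rightarrow> bool" where
  "has_tail_in r C \<longleftrightarrow> (\<exists>n. \<forall>i\<ge>n. r i \<in> C)"

definition ray_equiv :: "'a graph \<Rightarrow> (nat \<Rightarrow> 'a) \<Rightarrow> (nat \<Rightarrow> 'a) \<Rightarrow> bool" where
  "ray_equiv H r s \<longleftrightarrow>
     (\<forall>S. finite S \<and> S \<subseteq> verts H \<longrightarrow>
        (\<exists>x\<in>verts H - S. has_tail_in r (component_of H S x) \<and> has_tail_in s (component_of H S x)))"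

definition faithful :: "'a graph \<Rightarrow> 'a graph \<Rightarrow> bool" where
  "faithful A B \<longleftrightarrow>
     (\<forall>r. is_ray B r \<longrightarrow> (\<exists>s. is_ray A s \<and> ray_equiv B r s)) \<and>
     (\<forall>r s. is_ray A r \<and> is_ray A s \<longrightarrow> (ray_equiv A r s \<longleftrightarrow> ray_equiv B r s))"

end

theory Submission
  imports Defs
begin

(* The projection to G of a ray of G \<box> D is a walk that may pause but, D being finite,
   visits each vertex only finitely often; cutting out the loops at the last visit of each
   vertex turns it into a ray of G in the same end. Since D is finite and connected, two
   sequences in G \<box> D are equivalent iff their projections are: a finite separator S of
   G \<box> D lies in (fst ` S) \<times> verts D, and the component of G \<box> D - S over a component of
   G - fst ` S contains all its fibres. Faithfulness of F in G thus passes, through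
   projections and pruning, to F \<box> D in G \<box> D. *)

lemma component_of_refl: "x \<in> component_of H S x"
  unfolding component_of_def by simp

lemma component_of_trans:
  "y \<in> component_of H S x \<Longrightarrow> z \<in> component_of H S y \<Longrightarrow> z \<in> component_of H S x"
  unfolding component_of_def by simp

lemma component_of_sym:
  assumes "sym (edges H)" and "y \<in> component_of H S x"
  shows "x \<in> component_of H S y"
proof -
  have "sym (edges H \<inter> ((verts H - S) \<times> (verts H - S)))"
    using assms(1) by (auto simp: sym_def)
  then show ?thesis
    using assms(2) sym_rtrancl unfolding component_of_def by (fastforce dest: symD)
qed

lemma component_of_step:
  assumes "y \<in> component_of H S x" and "(y, z) \<in> edges H"
    and "y \<in> verts H - S" and "z \<in> verts H - S"
  shows "z \<in> component_of H S x"
  using assms unfolding component_of_def by (auto intro: rtrancl_into_rtrancl)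

lemma component_of_mem_verts:
  assumes "y \<in> component_of H S x" and "y \<noteq> x"
  shows "y \<in> verts H - S"
  using assms unfolding component_of_def by (auto elim: rtranclE)

lemma has_tail_in_mono: "has_tail_in r A \<Longrightarrow> A \<subseteq> B \<Longrightarrow> has_tail_in r B"
  unfolding has_tail_in_def by blast

lemma has_tail_in_Int_nonempty:
  assumes "has_tail_in r A" and "has_tail_in r B"
  shows "A \<inter> B \<noteq> {}"
proof -
  obtain m n where "\<forall>i\<ge>m. r i \<in> A" and "\<forall>i\<ge>n. r i \<in> B"
    using assms unfolding has_tail_in_def by blast
  then have "r (max m n) \<in> A \<inter> B" by simp
  then show ?thesis by blast
qed

lemma has_tail_in_comp:
  "has_tail_in r A \<Longrightarrow> f ` A \<subseteq> B \<Longrightarrow> has_tail_in (f \<circ> r) B"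
  unfolding has_tail_in_def image_subset_iff comp_apply by blast

lemma has_tail_in_comp_vimage:
  "has_tail_in (f \<circ> r) B \<Longrightarrow> range r \<subseteq> V \<Longrightarrow> V \<inter> f -` B \<subseteq> A \<Longrightarrow> has_tail_in r A"
  unfolding has_tail_in_def by (simp add: subset_iff) blast

lemma has_tail_in_subseq:
  assumes "has_tail_in r A" and "strict_mono \<sigma>"
  shows "has_tail_in (r \<circ> \<sigma>) A"
proof -
  obtain n where "\<forall>i\<ge>n. r i \<in> A" using assms(1) unfolding has_tail_in_def by blast
  moreover have "i \<le> \<sigma> i" for i using assms(2) by (rule strict_mono_imp_increasing)
  ultimately have "\<forall>i\<ge>n. r (\<sigma> i) \<in> A" using le_trans by blast
  then show ?thesis unfolding has_tail_in_def by auto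
qed

lemma ray_equivI:
  assumes "\<And>S. finite S \<Longrightarrow> S \<subseteq> verts H \<Longrightarrow>
    \<exists>x\<in>verts H - S. has_tail_in r (component_of H S x) \<and> has_tail_in s (component_of H S x)"
  shows "ray_equiv H r s"
  using assms unfolding ray_equiv_def by blast

lemma ray_equivD:
  assumes "ray_equiv H r s" and "finite S" and "S \<subseteq> verts H"
  obtains x where "x \<in> verts H - S"
    and "has_tail_in r (component_of H S x)" and "has_tail_in s (component_of H S x)"
  using assms unfolding ray_equiv_def by blast

lemma ray_equiv_sym: "ray_equiv H r s \<Longrightarrow> ray_equiv H s r"
  unfolding ray_equiv_def by blast

lemma ray_equiv_trans:
  assumes "sym (edges H)" and "ray_equiv H p q" and "ray_equiv H q r"
  shows "ray_equiv H p r"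
proof (rule ray_equivI)
  fix S assume S: "finite S" "S \<subseteq> verts H"
  obtain x where x: "x \<in> verts H - S" "has_tail_in p (component_of H S x)"
    "has_tail_in q (component_of H S x)"
    using ray_equivD[OF assms(2) S] .
  obtain x' where x': "has_tail_in q (component_of H S x')" "has_tail_in r (component_of H S x')"
    using ray_equivD[OF assms(3) S] .
  obtain y where y: "y \<in> component_of H S x" "y \<in> component_of H S x'"
    using has_tail_in_Int_nonempty[OF x(3) x'(1)] by blast
  have "x' \<in> component_of H S x"
    using component_of_trans[OF y(1) component_of_sym[OF assms(1) y(2)]] .
  then have "component_of H S x' \<subseteq> component_of H S x"
    using component_of_trans[of _ H S x] by blast
  then have "has_tail_in r (component_of H S x)" by (rule has_tail_in_mono[OF x'(2)])
  then show "\<exists>x\<in>verts H - S. has_tail_in p (component_of H S x) \<and> has_tail_in r (component_of H S x)"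
    using x(1,2) by blast
qed

lemma ray_equiv_cong:
  assumes "sym (edges H)" and "ray_equiv H p p'" and "ray_equiv H q q'"
  shows "ray_equiv H p q \<longleftrightarrow> ray_equiv H p' q'"
proof
  assume "ray_equiv H p q"
  with assms show "ray_equiv H p' q'" by (meson ray_equiv_sym ray_equiv_trans)
next
  assume "ray_equiv H p' q'"
  with assms show "ray_equiv H p q" by (meson ray_equiv_sym ray_equiv_trans)
qed

definition walk_in :: "'a graph \<Rightarrow> (nat \<Rightarrow> 'a) \<Rightarrow> bool" where
  "walk_in H W \<longleftrightarrow> (\<forall>i. W i \<in> verts H) \<and> (\<forall>i. W i = W (Suc i) \<or> (W i, W (Suc i)) \<in> edges H)"

definition finite_visits :: "(nat \<Rightarrow> 'a) \<Rightarrow> bool" where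
  "finite_visits W \<longleftrightarrow> (\<forall>v. finite {i. W i = v})"

lemma walk_in_subgraph: "walk_in F W \<Longrightarrow> subgraph F G \<Longrightarrow> walk_in G W"
  unfolding walk_in_def subgraph_def by blast

lemma walk_in_tail_component_of:
  assumes "walk_in H W" and "\<forall>i\<ge>n. W i \<notin> S" and "n \<le> i"
  shows "W i \<in> component_of H S (W n)"
  using assms(3)
proof (induction i rule: dec_induct)
  case base
  show ?case by (rule component_of_refl)
next
  case (step i)
  then show ?case
    using assms(1,2) component_of_step[OF step.IH, of "W (Suc i)"]
    unfolding walk_in_def by (metis Diff_iff le_Suc_eq)
qed

definition last_visit :: "(nat \<Rightarrow> 'a) \<Rightarrow> nat \<Rightarrow> nat" where
  "last_visit W i = Max {j. W j = W i}"

(* Jump to the last visit of the current vertex, then take one step: the vertices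
   reached are pairwise distinct. *)
primrec prune_index :: "(nat \<Rightarrow> 'a) \<Rightarrow> nat \<Rightarrow> nat" where
  "prune_index W 0 = last_visit W 0"
| "prune_index W (Suc k) = last_visit W (Suc (prune_index W k))"

lemma
  assumes "finite_visits W"
  shows last_visit_ge: "i \<le> last_visit W i"
    and last_visit_same: "W (last_visit W i) = W i"
    and last_visit_after: "last_visit W i < j \<Longrightarrow> W j \<noteq> W (last_visit W i)"
proof -
  have fin: "finite {j. W j = W i}" and mem: "i \<in> {j. W j = W i}"
    using assms unfolding finite_visits_def by simp_all
  show "i \<le> last_visit W i" unfolding last_visit_def using Max_ge[OF fin mem] .
  show same: "W (last_visit W i) = W i" unfolding last_visit_def using Max_in[OF fin] mem by blast
  show "last_visit W i < j \<Longrightarrow> W j \<noteq> W (last_visit W i)"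
    unfolding same unfolding last_visit_def using Max_ge[OF fin] by fastforce
qed

lemma strict_mono_prune_index:
  assumes "finite_visits W"
  shows "strict_mono (prune_index W)"
  unfolding strict_mono_Suc_iff using last_visit_ge[OF assms] by (simp add: Suc_le_lessD)

lemma prune_index_after:
  assumes "finite_visits W" and "prune_index W k < j"
  shows "W j \<noteq> W (prune_index W k)"
  using assms last_visit_after[OF assms(1)] by (cases k) simp_all

lemma is_ray_prune:
  assumes "walk_in H W" and "finite_visits W"
  shows "is_ray H (W \<circ> prune_index W)"
  unfolding is_ray_def
proof (intro conjI allI)
  have "W (prune_index W a) \<noteq> W (prune_index W b)" if "a < b" for a b
    using prune_index_after[OF assms(2)] strict_mono_prune_index[OF assms(2)] that
    by (metis strict_mono_less)
  then show "inj (W \<circ> prune_index W)"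
    by (metis comp_apply injI linorder_neqE_nat)
next
  fix i
  show "(W \<circ> prune_index W) i \<in> verts H" using assms(1) unfolding walk_in_def by simp
  have "W (Suc (prune_index W i)) \<noteq> W (prune_index W i)"
    using prune_index_after[OF assms(2)] by simp
  then show "((W \<circ> prune_index W) i, (W \<circ> prune_index W) (Suc i)) \<in> edges H"
    using assms(1) last_visit_same[OF assms(2)] unfolding walk_in_def
    by (metis comp_apply prune_index.simps(2))
qed

lemma ray_equiv_prune:
  assumes "walk_in H W" and "finite_visits W"
  shows "ray_equiv H W (W \<circ> prune_index W)"
proof (rule ray_equivI)
  fix S assume S: "finite S" "S \<subseteq> verts H"
  have "{i. W i \<in> S} = (\<Union>v\<in>S. {i. W i = v})" by blast
  then have "finite {i. W i \<in> S}"
    using S assms(2) unfolding finite_visits_def by simp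
  then obtain n where n: "\<forall>i\<ge>n. W i \<notin> S"
    by (metis finite_nat_set_iff_bounded_le mem_Collect_eq not_less_eq_eq)
  have tail: "has_tail_in W (component_of H S (W n))"
    unfolding has_tail_in_def using walk_in_tail_component_of[OF assms(1) n] by blast
  moreover have "W n \<in> verts H - S" using n assms(1) unfolding walk_in_def by simp
  ultimately show "\<exists>x\<in>verts H - S. has_tail_in W (component_of H S x) \<and>
      has_tail_in (W \<circ> prune_index W) (component_of H S x)"
    using has_tail_in_subseq[OF tail strict_mono_prune_index[OF assms(2)]] by blast
qed

lemma faithful_walk_equiv_ray:
  assumes "faithful F G" and "sym (edges G)" and "walk_in G W" and "finite_visits W"
  shows "\<exists>s. is_ray F s \<and> ray_equiv G W s"
proof -
  obtain s where "is_ray F s" and "ray_equiv G (W \<circ> prune_index W) s"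
    using assms(1) is_ray_prune[OF assms(3,4)] unfolding faithful_def by blast
  then show ?thesis
    using ray_equiv_trans[OF assms(2) ray_equiv_prune[OF assms(3,4)]] by blast
qed

lemma faithful_walk_equiv_iff:
  assumes "faithful F G" and "subgraph F G"
    and "walk_in F W" and "finite_visits W" and "walk_in F W'" and "finite_visits W'"
  shows "ray_equiv F W W' \<longleftrightarrow> ray_equiv G W W'"
proof -
  have sym: "sym (edges F)" "sym (edges G)"
    using assms(2) unfolding subgraph_def is_graph_def by simp_all
  have walks_G: "walk_in G W" "walk_in G W'"
    using walk_in_subgraph assms(2,3,5) by blast+
  have "ray_equiv F W W' \<longleftrightarrow> ray_equiv F (W \<circ> prune_index W) (W' \<circ> prune_index W')"
    using ray_equiv_cong[OF sym(1)] ray_equiv_prune assms(3-6) by blast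
  also have "\<dots> \<longleftrightarrow> ray_equiv G (W \<circ> prune_index W) (W' \<circ> prune_index W')"
    using assms(1) is_ray_prune assms(3-6) unfolding faithful_def by blast
  also have "\<dots> \<longleftrightarrow> ray_equiv G W W'"
    using ray_equiv_cong[OF sym(2)] ray_equiv_prune walks_G assms(4,6) by blast
  finally show ?thesis .
qed

lemma verts_cart_prod: "verts (H \<box> D) = verts H \<times> verts D"
  by (simp add: cart_prod_def)

lemma is_graph_cart_prod: "is_graph H \<Longrightarrow> is_graph D \<Longrightarrow> is_graph (H \<box> D)"
  unfolding is_graph_def cart_prod_def sym_def irrefl_def by auto

lemma subgraph_cart_prod:
  assumes "subgraph F G" and "is_graph D"
  shows "subgraph (F \<box> D) (G \<box> D)"
proof -
  have "is_graph (F \<box> D)" and "is_graph (G \<box> D)"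
    using assms is_graph_cart_prod unfolding subgraph_def by blast+
  moreover have "verts (F \<box> D) \<subseteq> verts (G \<box> D)" and "edges (F \<box> D) \<subseteq> edges (G \<box> D)"
    using assms(1) unfolding subgraph_def cart_prod_def by auto
  ultimately show ?thesis unfolding subgraph_def by blast
qed

lemma is_ray_cart_prod_const:
  "is_ray H s \<Longrightarrow> d \<in> verts D \<Longrightarrow> is_ray (H \<box> D) (\<lambda>i. (s i, d))"
  unfolding is_ray_def cart_prod_def inj_def by auto

lemma cart_prod_edge_fst:
  "(y, z) \<in> edges (H \<box> D) \<Longrightarrow> fst y = fst z \<or> (fst y, fst z) \<in> edges H"
  by (cases y; cases z) (auto simp: cart_prod_def)

lemma walk_in_fst_of_ray:
  assumes "is_ray (H \<box> D) R"
  shows "walk_in H (fst \<circ> R)"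
  unfolding walk_in_def
proof (intro conjI allI)
  fix i
  have "R i \<in> verts (H \<box> D)" and edge: "(R i, R (Suc i)) \<in> edges (H \<box> D)"
    using assms unfolding is_ray_def by blast+
  then show "(fst \<circ> R) i \<in> verts H" by (simp add: verts_cart_prod mem_Times_iff)
  show "(fst \<circ> R) i = (fst \<circ> R) (Suc i) \<or> ((fst \<circ> R) i, (fst \<circ> R) (Suc i)) \<in> edges H"
    using cart_prod_edge_fst[OF edge] by simp
qed

lemma finite_visits_fst_of_ray:
  assumes "is_ray (H \<box> D) R" and "finite (verts D)"
  shows "finite_visits (fst \<circ> R)"
  unfolding finite_visits_def
proof
  fix v
  have "R i \<in> verts H \<times> verts D" for i
    using assms(1) unfolding is_ray_def verts_cart_prod by blast
  then have "{i. fst (R i) = v} \<subseteq> R -` ({v} \<times> verts D)"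
    by (auto simp: mem_Times_iff)
  moreover have "finite (R -` ({v} \<times> verts D))"
    using assms unfolding is_ray_def by (intro finite_vimageI) simp_all
  ultimately show "finite {i. (fst \<circ> R) i = v}" by (simp add: finite_subset)
qed

lemma component_of_cart_prod_fst:
  assumes "y \<in> component_of (H \<box> D) (T \<times> verts D) x"
  shows "fst y \<in> component_of H T (fst x)"
proof -
  let ?V = "verts (H \<box> D) - T \<times> verts D"
  have "(x, y) \<in> (edges (H \<box> D) \<inter> ?V \<times> ?V)\<^sup>*"
    using assms unfolding component_of_def by simp
  then show ?thesis
  proof (induction rule: rtrancl_induct)
    case base
    show ?case by (rule component_of_refl)
  next
    case (step y z)
    then have "fst y \<in> verts H - T" and "fst z \<in> verts H - T"
      by (auto simp: verts_cart_prod mem_Times_iff)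
    then show ?case
      using step cart_prod_edge_fst[of y z H D] component_of_step[OF step.IH] by auto
  qed
qed

lemma cart_prod_fibre_notin:
  "a \<in> verts H - fst ` S \<Longrightarrow> d \<in> verts D \<Longrightarrow> (a, d) \<in> verts (H \<box> D) - S"
  by (force simp: verts_cart_prod)

lemma component_of_cart_prod_fibre_fst:
  assumes "a \<in> component_of H (fst ` S) x" and "d \<in> verts D"
  shows "(a, d) \<in> component_of (H \<box> D) S (x, d)"
proof -
  have "(x, a) \<in> (edges H \<inter> ((verts H - fst ` S) \<times> (verts H - fst ` S)))\<^sup>*"
    using assms(1) unfolding component_of_def by simp
  then show ?thesis
  proof (induction rule: rtrancl_induct)
    case base
    show ?case by (rule component_of_refl)
  next
    case (step b c)
    then have bc: "b \<in> verts H - fst ` S" "c \<in> verts H - fst ` S" "(b, c) \<in> edges H"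
      by auto
    then have "((b, d), (c, d)) \<in> edges (H \<box> D)"
      using assms(2) by (simp add: cart_prod_def)
    then show ?case
      using component_of_step[OF step.IH] cart_prod_fibre_notin[OF bc(1) assms(2)]
        cart_prod_fibre_notin[OF bc(2) assms(2)] by blast
  qed
qed

lemma component_of_cart_prod_fibre_snd:
  assumes "(d, e) \<in> (edges D)\<^sup>*" and "is_graph D" and "a \<in> verts H - fst ` S"
  shows "(a, e) \<in> component_of (H \<box> D) S (a, d)"
  using assms(1)
proof (induction rule: rtrancl_induct)
  case base
  show ?case by (rule component_of_refl)
next
  case (step b c)
  then have "b \<in> verts D" "c \<in> verts D"
    using assms(2) unfolding is_graph_def by auto
  moreover have "((a, b), (a, c)) \<in> edges (H \<box> D)"
    using step(2) assms(3) by (simp add: cart_prod_def)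
  ultimately show ?case
    using component_of_step[OF step.IH] cart_prod_fibre_notin[OF assms(3)] by blast
qed

lemma component_of_cart_prod_lift:
  assumes "is_graph D" and "connected_graph D" and "d \<in> verts D"
    and "x \<in> verts H - fst ` S" and "y \<in> verts (H \<box> D)" and "fst y \<in> component_of H (fst ` S) x"
  shows "y \<in> component_of (H \<box> D) S (x, d)"
proof -
  obtain a e where y: "y = (a, e)" by (cases y)
  have "e \<in> verts D" using assms(5) y by (simp add: verts_cart_prod)
  then have "(d, e) \<in> (edges D)\<^sup>*" using assms(2,3) unfolding connected_graph_def by blast
  moreover have "a \<in> verts H - fst ` S"
    using component_of_mem_verts[of a H "fst ` S" x] assms(4,6) y by (cases "a = x") auto
  ultimately have "y \<in> component_of (H \<box> D) S (a, d)"
    using component_of_cart_prod_fibre_snd[OF _ assms(1)] y by simp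
  moreover have "(a, d) \<in> component_of (H \<box> D) S (x, d)"
    using component_of_cart_prod_fibre_fst[OF _ assms(3)] assms(6) y by simp
  ultimately show ?thesis by (rule component_of_trans[rotated])
qed

lemma ray_equiv_fst_of_cart_prod:
  assumes "finite (verts D)" and "ray_equiv (H \<box> D) R R'"
  shows "ray_equiv H (fst \<circ> R) (fst \<circ> R')"
proof (rule ray_equivI)
  fix T assume T: "finite T" "T \<subseteq> verts H"
  then have T': "finite (T \<times> verts D)" "T \<times> verts D \<subseteq> verts (H \<box> D)"
    using assms(1) by (auto simp: verts_cart_prod)
  obtain x where x: "x \<in> verts (H \<box> D) - T \<times> verts D"
      "has_tail_in R (component_of (H \<box> D) (T \<times> verts D) x)"
      "has_tail_in R' (component_of (H \<box> D) (T \<times> verts D) x)"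
    using ray_equivD[OF assms(2) T'] .
  have proj: "fst ` component_of (H \<box> D) (T \<times> verts D) x \<subseteq> component_of H T (fst x)"
    using component_of_cart_prod_fst by blast
  have "fst x \<in> verts H - T" using x(1) by (cases x) (auto simp: verts_cart_prod)
  then show "\<exists>x\<in>verts H - T. has_tail_in (fst \<circ> R) (component_of H T x) \<and>
      has_tail_in (fst \<circ> R') (component_of H T x)"
    using has_tail_in_comp[OF x(2) proj] has_tail_in_comp[OF x(3) proj] by blast
qed

lemma ray_equiv_cart_prod_of_fst:
  assumes "is_graph D" and "connected_graph D"
    and "range R \<subseteq> verts (H \<box> D)" and "range R' \<subseteq> verts (H \<box> D)"
    and "ray_equiv H (fst \<circ> R) (fst \<circ> R')"
  shows "ray_equiv (H \<box> D) R R'"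
proof (rule ray_equivI)
  fix S assume "finite S" "S \<subseteq> verts (H \<box> D)"
  then have S': "finite (fst ` S)" "fst ` S \<subseteq> verts H" by (auto simp: verts_cart_prod)
  obtain x where x: "x \<in> verts H - fst ` S"
      "has_tail_in (fst \<circ> R) (component_of H (fst ` S) x)"
      "has_tail_in (fst \<circ> R') (component_of H (fst ` S) x)"
    using ray_equivD[OF assms(5) S'] .
  obtain d where d: "d \<in> verts D" using assms(2) unfolding connected_graph_def by blast
  have lift: "verts (H \<box> D) \<inter> fst -` component_of H (fst ` S) x \<subseteq> component_of (H \<box> D) S (x, d)"
    using component_of_cart_prod_lift[OF assms(1,2) d x(1)] by blast
  show "\<exists>y\<in>verts (H \<box> D) - S. has_tail_in R (component_of (H \<box> D) S y) \<and>
      has_tail_in R' (component_of (H \<box> D) S y)"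
    using cart_prod_fibre_notin[OF x(1) d] has_tail_in_comp_vimage[OF x(2) assms(3) lift]
      has_tail_in_comp_vimage[OF x(3) assms(4) lift] by blast
qed

lemma ray_equiv_cart_prod_iff:
  assumes "is_graph D" and "finite (verts D)" and "connected_graph D"
    and "range R \<subseteq> verts (H \<box> D)" and "range R' \<subseteq> verts (H \<box> D)"
  shows "ray_equiv (H \<box> D) R R' \<longleftrightarrow> ray_equiv H (fst \<circ> R) (fst \<circ> R')"
  using ray_equiv_fst_of_cart_prod[OF assms(2)] ray_equiv_cart_prod_of_fst[OF assms(1,3-5)] by blast

lemma faithful_cart_prod_ray:
  assumes "faithful F G" and "subgraph F G"
    and "is_graph D" and "finite (verts D)" and "connected_graph D"
    and R: "is_ray (G \<box> D) R"
  shows "\<exists>S. is_ray (F \<box> D) S \<and> ray_equiv (G \<box> D) R S"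
proof -
  have "sym (edges G)" using assms(2) unfolding subgraph_def is_graph_def by blast
  then obtain s where s: "is_ray F s" "ray_equiv G (fst \<circ> R) s"
    using faithful_walk_equiv_ray[OF assms(1)] walk_in_fst_of_ray[OF R]
      finite_visits_fst_of_ray[OF R assms(4)] by blast
  obtain d where d: "d \<in> verts D" using assms(5) unfolding connected_graph_def by blast
  let ?S = "\<lambda>i. (s i, d)"
  have S: "is_ray (F \<box> D) ?S" using is_ray_cart_prod_const[OF s(1) d] .
  have "range R \<subseteq> verts (G \<box> D)" using R unfolding is_ray_def by auto
  moreover have "range ?S \<subseteq> verts (G \<box> D)"
    using s(1) d assms(2) unfolding is_ray_def subgraph_def verts_cart_prod by auto
  ultimately have "ray_equiv (G \<box> D) R ?S \<longleftrightarrow> ray_equiv G (fst \<circ> R) (fst \<circ> ?S)"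
    by (rule ray_equiv_cart_prod_iff[OF assms(3-5)])
  moreover have "fst \<circ> ?S = s" by (simp add: comp_def)
  ultimately show ?thesis using S s(2) by auto
qed

lemma faithful_cart_prod_ray_equiv_iff:
  assumes "faithful F G" and "subgraph F G"
    and "is_graph D" and "finite (verts D)" and "connected_graph D"
    and R: "is_ray (F \<box> D) R" and R': "is_ray (F \<box> D) R'"
  shows "ray_equiv (F \<box> D) R R' \<longleftrightarrow> ray_equiv (G \<box> D) R R'"
proof -
  have in_F: "range R \<subseteq> verts (F \<box> D)" "range R' \<subseteq> verts (F \<box> D)"
    using R R' unfolding is_ray_def by auto
  moreover have "verts (F \<box> D) \<subseteq> verts (G \<box> D)"
    using assms(2) unfolding subgraph_def verts_cart_prod by auto
  ultimately have in_G: "range R \<subseteq> verts (G \<box> D)" "range R' \<subseteq> verts (G \<box> D)" by auto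
  have "ray_equiv (F \<box> D) R R' \<longleftrightarrow> ray_equiv F (fst \<circ> R) (fst \<circ> R')"
    using ray_equiv_cart_prod_iff[OF assms(3-5) in_F] .
  also have "\<dots> \<longleftrightarrow> ray_equiv G (fst \<circ> R) (fst \<circ> R')"
    using faithful_walk_equiv_iff[OF assms(1,2)] walk_in_fst_of_ray[OF R] walk_in_fst_of_ray[OF R']
      finite_visits_fst_of_ray[OF R assms(4)] finite_visits_fst_of_ray[OF R' assms(4)] by blast
  also have "\<dots> \<longleftrightarrow> ray_equiv (G \<box> D) R R'"
    using ray_equiv_cart_prod_iff[OF assms(3-5) in_G] by simp
  finally show ?thesis .
qed

theorem lemma18:
  fixes G F :: "'a graph" and D :: "'b graph"
  assumes "is_graph G" and "infinite (verts G)" and "locally_finite G"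
    and "subgraph F G"
    and "is_graph D" and "finite_graph D" and "connected_graph D"
    and "faithful F G"
  shows "subgraph (F \<box> D) (G \<box> D) \<and> faithful (F \<box> D) (G \<box> D)"
proof -
  have finD: "finite (verts D)" using assms(6) unfolding finite_graph_def .
  show ?thesis
    unfolding faithful_def
    using subgraph_cart_prod[OF assms(4,5)]
      faithful_cart_prod_ray[OF assms(8,4,5) finD assms(7)]
      faithful_cart_prod_ray_equiv_iff[OF assms(8,4,5) finD assms(7)] by blast
qed

end
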